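(* For all $m\in\mathbb{N}$: if $m$ is even, then $\frac{2^m}{3}-\frac{2^{2k}}{3}\in S_m$ for every integer $k$ with $0\leq k\leq\frac{m-4}{2}$; if $m$ is odd, then $\frac{2^m}{3}-\frac{2^{2k+1}}{3}\in S_m$ for every integer $k$ with $0\leq k\leq\frac{m-5}{2}$.
   Context: $\mathbb{N}=\{1,2,3,\dots\}$. The Collatz map $T:\mathbb{N}\to\mathbb{N}$ is $T(n)=\frac{3n+1}{2}$ if $n$ is odd and $T(n)=\frac{n}{2}$ if $n$ is even; $T^{(k)}$ denotes the $k$-fold composition. The total stopping time is $\sigma_\infty(1)=0$ and, for $n\geq 2$, $\sigma_\infty(n)=\inf\{k\in\mathbb{N}\cup\{\infty\} : T^{(k)}(n)=1\}$. Let $S_0=\{1\}$ and $S_k=\{n\in\mathbb{N}:\sigma_\infty(n)=k\}$ for $k\geq 1$. *)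

theory Defs
  imports Complex_Main "HOL-Library.Extended_Nat"
begin

definition collatzT :: "nat \<Rightarrow> nat" where
  "collatzT n = (if odd n then (3 * n + 1) div 2 else n div 2)"

definition sigma_inf :: "nat \<Rightarrow> enat" where
  "sigma_inf n = (if n = 1 then 0
     else if (\<exists>k\<ge>1. (collatzT ^^ k) n = 1)
          then enat (LEAST k. k \<ge> 1 \<and> (collatzT ^^ k) n = 1) else \<infinity>)"

definition S :: "nat \<Rightarrow> nat set" where
  "S k = (if k = 0 then {1} else {n. n \<ge> 1 \<and> sigma_inf n = enat k})"

end

theory Submission
  imports Defs
begin

text \<open>For \<open>h \<ge> 2\<close> the number \<open>a = (4^h - 1)/3\<close> is odd, exceeds 1, and satisfies
  \<open>T a = 2^(2h-1)\<close>. Hence \<open>2^e a\<close> is halved \<open>e\<close> times down to \<open>a\<close>, sent to \<open>2^(2h-1)\<close>, and then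
  halved down to 1, passing through no other value 1 on the way: its total stopping time is
  \<open>e + 2h\<close>, and \<open>2^e a = (2^(e+2h) - 2^e)/3\<close>. Both cases of the theorem are the instances
  \<open>e = 2k\<close> and \<open>e = 2k + 1\<close>.\<close>

lemma collatzT_double [simp]: "collatzT (2 * x) = x"
  by (simp add: collatzT_def)

lemma funpow_collatzT_pow2_mult: "(collatzT ^^ i) (2 ^ i * x) = x"
  by (induction i arbitrary: x) (simp_all add: funpow_Suc_right mult.assoc del: funpow.simps)

lemma collatzT_odd_preimage:
  assumes "3 * a + 1 = 2 ^ Suc j"
  shows "collatzT a = 2 ^ j"
proof -
  have "odd a"
    using assms by (metis dvd_add_right_iff dvd_triv_left even_mult_iff odd_numeral
        odd_one power_Suc)
  then show ?thesis
    using assms by (simp add: collatzT_def)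
qed

lemma sigma_inf_eq_enatI:
  assumes "n \<noteq> 1" "k \<ge> 1" "(collatzT ^^ k) n = 1"
    and "\<And>i. 1 \<le> i \<Longrightarrow> i < k \<Longrightarrow> (collatzT ^^ i) n \<noteq> 1"
  shows "sigma_inf n = enat k"
proof -
  have "(LEAST i. i \<ge> 1 \<and> (collatzT ^^ i) n = 1) = k"
    by (rule Least_equality) (use assms in \<open>auto simp: not_less[symmetric]\<close>)
  then show ?thesis
    using assms(1-3) unfolding sigma_inf_def by auto
qed

lemma sigma_inf_pow2_mult_odd_preimage:
  assumes a: "3 * a + 1 = 2 ^ Suc j" and "a > 1"
  shows "sigma_inf (2 ^ e * a) = enat (e + Suc j)"
proof -
  let ?n = "2 ^ e * a"
  have descent: "(collatzT ^^ i) ?n = 2 ^ (e - i) * a" if "i \<le> e" for i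
  proof -
    have "?n = 2 ^ i * (2 ^ (e - i) * a)"
      using that by (simp add: mult.assoc flip: power_add)
    then show ?thesis
      by (simp only: funpow_collatzT_pow2_mult)
  qed
  have after_a: "(collatzT ^^ (e + Suc t)) ?n = 2 ^ (j - t)" if "t \<le> j" for t
  proof -
    have "(collatzT ^^ (e + Suc t)) ?n = (collatzT ^^ Suc t) ((collatzT ^^ e) ?n)"
      by (simp only: add.commute[of e] funpow_add comp_apply)
    also have "\<dots> = (collatzT ^^ t) (collatzT a)"
      using descent[of e] by (simp add: funpow_Suc_right del: funpow.simps)
    also have "\<dots> = (collatzT ^^ t) (2 ^ t * 2 ^ (j - t))"
      using that by (simp add: collatzT_odd_preimage[OF a] flip: power_add)
    finally show ?thesis
      by (simp add: funpow_collatzT_pow2_mult)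
  qed
  show ?thesis
  proof (rule sigma_inf_eq_enatI)
    show "?n \<noteq> 1" "(collatzT ^^ (e + Suc j)) ?n = 1"
      using \<open>a > 1\<close> after_a[of j] by auto
    show "(collatzT ^^ i) ?n \<noteq> 1" if "i < e + Suc j" for i
    proof (cases "i \<le> e")
      case True
      then show ?thesis
        using descent \<open>a > 1\<close> by simp
    next
      case False
      then have "i = e + Suc (i - e - 1)" "i - e - 1 < j"
        using that by auto
      then show ?thesis
        using after_a[of "i - e - 1"] by simp
    qed
  qed simp
qed

lemma pow4_mod_3: "(4::nat) ^ h mod 3 = 1"
  by (induction h) (simp_all add: mod_mult_right_eq[of 4, symmetric])

lemma stopping_time_witness:
  assumes "h \<ge> 2"
  shows "\<exists>n\<in>S (e + 2 * h). real n = 2 ^ (e + 2 * h) / 3 - 2 ^ e / 3"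
proof -
  define a :: nat where "a = 4 ^ h div 3"
  have "3 * a + 1 = 4 ^ h"
    using div_mult_mod_eq[of "4 ^ h :: nat" 3] pow4_mod_3[of h] unfolding a_def by linarith
  then have a: "3 * a + 1 = 2 ^ Suc (2 * h - 1)"
    using assms by (simp add: power_mult)
  have "(2::nat) ^ Suc 1 < 2 ^ Suc (2 * h - 1)"
    using assms by (intro power_strict_increasing) auto
  then have "a > 1"
    using a by simp
  then have "2 ^ e * a \<in> S (e + 2 * h)"
    using sigma_inf_pow2_mult_odd_preimage[OF a] assms by (simp add: S_def)
  moreover have "3 * real (2 ^ e * a) = 2 ^ (e + 2 * h) - 2 ^ e"
  proof -
    have "3 * real a = 2 ^ (2 * h) - 1"
      using arg_cong[OF a, of real] assms by simp
    then have "3 * real (2 ^ e * a) = 2 ^ e * (2 ^ (2 * h) - 1)"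
      by simp
    then show ?thesis
      by (simp add: power_add right_diff_distrib)
  qed
  ultimately show ?thesis
    by (intro bexI[of _ "2 ^ e * a"]) simp_all
qed

theorem mainTheorem5:
  fixes m :: nat
  assumes "m \<ge> 1"
  shows "(even m \<longrightarrow> (\<forall>k::nat. real k \<le> (real m - 4) / 2 \<longrightarrow>
            (\<exists>n\<in>S m. real n = 2 ^ m / 3 - 2 ^ (2 * k) / 3)))
       \<and> (odd m \<longrightarrow> (\<forall>k::nat. real k \<le> (real m - 5) / 2 \<longrightarrow>
            (\<exists>n\<in>S m. real n = 2 ^ m / 3 - 2 ^ (2 * k + 1) / 3)))"
proof (intro conjI impI allI)
  fix k :: nat
  assume "even m" "real k \<le> (real m - 4) / 2"
  then have "real (2 * k + 4) \<le> real m"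
    by simp
  then have "2 * k + 4 \<le> m"
    by linarith
  with \<open>even m\<close> have "m = 2 * k + 2 * ((m - 2 * k) div 2)" "(m - 2 * k) div 2 \<ge> 2"
    by presburger+
  then show "\<exists>n\<in>S m. real n = 2 ^ m / 3 - 2 ^ (2 * k) / 3"
    by (metis stopping_time_witness)
next
  fix k :: nat
  assume "odd m" "real k \<le> (real m - 5) / 2"
  then have "real (2 * k + 5) \<le> real m"
    by simp
  then have "2 * k + 5 \<le> m"
    by linarith
  with \<open>odd m\<close> have "m = (2 * k + 1) + 2 * ((m - 2 * k) div 2)" "(m - 2 * k) div 2 \<ge> 2"
    by presburger+
  then show "\<exists>n\<in>S m. real n = 2 ^ m / 3 - 2 ^ (2 * k + 1) / 3"
    by (metis stopping_time_witness)
qed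

end
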